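(* The median rule $\mathrm{MED}$ and the reversal scoring rule $R_{rev}$ are agenda separable: for $R\in\{\mathrm{MED},R_{rev}\}$, every agenda $\mathcal{A}$, every independent partition $\{\mathcal{A}_1,\mathcal{A}_2\}$ of $\mathcal{A}$ and every profile $P\in\mathcal{J}_{\mathcal{A}}^n$, $R(P)=\{J^1\cup J^2 \mid J^1\in R(P\downarrow\mathcal{A}_1),\ J^2\in R(P\downarrow\mathcal{A}_2)\}$.
   Context: Fix a propositional language, a consistent formula $\Gamma$ (the integrity constraint) and a number $n\ge1$ of agents. An issue is a pair $\{\varphi,\neg\varphi\}$ with $\varphi$ neither a tautology nor a contradiction. An agenda $\mathcal{A}$ is a finite set of issues; a sub-agenda is a union of some issues of $\mathcal{A}$. A judgment set over $\mathcal{A}$ is a subset $J\subseteq\mathcal{A}$; it is complete if it contains $\varphi$ or $\neg\varphi$ for each issue, and consistent if $J\cup\{\Gamma\}$ is satisfiable. $\mathcal{J}_{\mathcal{A}}$ denotes the set of complete consistent judgment sets over $\mathcal{A}$ (likewise for sub-agendas, with the same $\Gamma$). A profile is $P=\langle J_1,\dots,J_n\rangle\in\mathcal{J}_{\mathcal{A}}^n$; its restriction to a sub-agenda $\mathcal{A}'$ is $P\downarrow\mathcal{A}'=\langle J_1\cap\mathcal{A}',\dots,J_n\cap\mathcal{A}'\rangle$. $N(P,\varphi)=|\{i:\varphi\in J_i\}|$ and $d_H(J,J')=|J\setminus J'|$. A partition $\{\mathcal{A}_1,\mathcal{A}_2\}$ of $\mathcal{A}$ into sub-agendas is independent if for all $J^1\in\mathcal{J}_{\mathcal{A}_1}$,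 $J^2\in\mathcal{J}_{\mathcal{A}_2}$, $J^1\cup J^2$ is consistent. The median rule is $\mathrm{MED}(P)=\arg\max_{J\in\mathcal{J}_{\mathcal{A}}}\sum_{\varphi\in J}N(P,\varphi)$. The reversal scoring rule is $R_{rev}(P)=\arg\max_{J\in\mathcal{J}_{\mathcal{A}}}\sum_{i=1}^n\sum_{\varphi\in J}s_{rev}(J_i,\varphi)$, where $s_{rev}(J_i,\varphi)$ is the minimal number of judgment reversals needed in $J_i$ to reject $\varphi$, i.e. $\min\{d_H(J_i,J')\mid J'\in\mathcal{J}_{\mathcal{A}},\ \varphi\notin J'\}$. *)

theory Defs
  imports Main
begin

datatype 'v form =
    Atom 'v
  | Neg "'v form"
  | Conj "'v form" "'v form"
  | Disj "'v form" "'v form"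
  | Imp "'v form" "'v form"

fun eval :: "('v \<Rightarrow> bool) \<Rightarrow> 'v form \<Rightarrow> bool" where
  "eval v (Atom p) = v p"
| "eval v (Neg f) = (\<not> eval v f)"
| "eval v (Conj f g) = (eval v f \<and> eval v g)"
| "eval v (Disj f g) = (eval v f \<or> eval v g)"
| "eval v (Imp f g) = (eval v f \<longrightarrow> eval v g)"

definition satisfiable :: "'v form set \<Rightarrow> bool" where
  "satisfiable S \<longleftrightarrow> (\<exists>v. \<forall>f\<in>S. eval v f)"

definition tautology :: "'v form \<Rightarrow> bool" where
  "tautology f \<longleftrightarrow> (\<forall>v. eval v f)"

definition contradiction :: "'v form \<Rightarrow> bool" where
  "contradiction f \<longleftrightarrow> (\<forall>v. \<not> eval v f)"

definition issue :: "'v form set \<Rightarrow> bool" where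
  "issue I \<longleftrightarrow> (\<exists>f. I = {f, Neg f} \<and> \<not> tautology f \<and> \<not> contradiction f)"

definition agenda :: "'v form set set \<Rightarrow> bool" where
  "agenda A \<longleftrightarrow> finite A \<and> (\<forall>I\<in>A. issue I)"

text \<open>Complete consistent judgment sets over agenda A w.r.t. integrity constraint Gam.\<close>
definition JS :: "'v form \<Rightarrow> 'v form set set \<Rightarrow> 'v form set set" where
  "JS Gam A = {J. J \<subseteq> \<Union>A \<and> (\<forall>I\<in>A. J \<inter> I \<noteq> {}) \<and> satisfiable (insert Gam J)}"

definition profile :: "'v form \<Rightarrow> nat \<Rightarrow> 'v form set set \<Rightarrow> 'v form set list \<Rightarrow> bool" where
  "profile Gam n A P \<longleftrightarrow> length P = n \<and> (\<forall>J\<in>set P. J \<in> JS Gam A)"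

definition restrict :: "'v form set list \<Rightarrow> 'v form set set \<Rightarrow> 'v form set list" where
  "restrict P A' = map (\<lambda>J. J \<inter> \<Union>A') P"

definition support :: "'v form set list \<Rightarrow> 'v form \<Rightarrow> nat" where
  "support P f = card {i. i < length P \<and> f \<in> P ! i}"

definition dH :: "'v form set \<Rightarrow> 'v form set \<Rightarrow> nat" where
  "dH J J' = card (J - J')"

definition independent_partition ::
  "'v form \<Rightarrow> 'v form set set \<Rightarrow> 'v form set set \<Rightarrow> 'v form set set \<Rightarrow> bool" where
  "independent_partition Gam A A1 A2 \<longleftrightarrow>
     A1 \<union> A2 = A \<and> A1 \<inter> A2 = {} \<and> A1 \<noteq> {} \<and> A2 \<noteq> {} \<and>
     (\<forall>J1\<in>JS Gam A1. \<forall>J2\<in>JS Gam A2. satisfiable (insert Gam (J1 \<union> J2)))"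

definition argmax_JS :: "'v form \<Rightarrow> 'v form set set \<Rightarrow> ('v form set \<Rightarrow> nat) \<Rightarrow> 'v form set set" where
  "argmax_JS Gam A sc = {J \<in> JS Gam A. \<forall>J'\<in>JS Gam A. sc J' \<le> sc J}"

definition MED :: "'v form \<Rightarrow> 'v form set set \<Rightarrow> 'v form set list \<Rightarrow> 'v form set set" where
  "MED Gam A P = argmax_JS Gam A (\<lambda>J. \<Sum>f\<in>J. support P f)"

text \<open>If no complete consistent
judgment set rejects f, the value is set to 0 (any constant gives the same rule, since then
every candidate contains f).\<close>
definition s_rev :: "'v form \<Rightarrow> 'v form set set \<Rightarrow> 'v form set \<Rightarrow> 'v form \<Rightarrow> nat" where
  "s_rev Gam A Ji f =
     (let D = {dH Ji J' | J'. J' \<in> JS Gam A \<and> f \<notin> J'} in if D = {} then 0 else Min D)"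

definition Rrev :: "'v form \<Rightarrow> 'v form set set \<Rightarrow> 'v form set list \<Rightarrow> 'v form set set" where
  "Rrev Gam A P = argmax_JS Gam A (\<lambda>J. \<Sum>i<length P. \<Sum>f\<in>J. s_rev Gam A (P ! i) f)"

end

theory Submission
  imports Defs
begin

text \<open>Two sub-agendas of an independent partition can only share formulas that every
consistent judgment set over either of them accepts: if a judgment set over one of them
rejected such a formula, its union with any judgment set over the other would contain a
whole issue. Hence the complete consistent judgment sets over the agenda are exactly the
unions \<open>J1 \<union> J2\<close> of judgment sets over the two parts, and \<open>J1 \<inter> J2\<close> is one and the same set
for all of them. Both rules maximise a sum of formula weights; the weights of the median rule
only depend on the formula, and those of the reversal rule on a formula of one part only depend
on the restriction of the profile to that part, because the cheapest way to reject it keeps the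
other part unchanged. So the total score is, up to a constant, the sum of the scores of the
two restrictions, and a maximiser is a union of maximisers.\<close>

lemma argmax_union_decomp:
  fixes s t u :: "'a set \<Rightarrow> nat"
  assumes S: "S = {J1 \<union> J2 | J1 J2. J1 \<in> S1 \<and> J2 \<in> S2}"
    and score: "\<And>J1 J2. J1 \<in> S1 \<Longrightarrow> J2 \<in> S2 \<Longrightarrow> s (J1 \<union> J2) + c = t J1 + u J2"
  shows "{J \<in> S. \<forall>J'\<in>S. s J' \<le> s J} =
    {J1 \<union> J2 | J1 J2. J1 \<in> {J \<in> S1. \<forall>J'\<in>S1. t J' \<le> t J}
                    \<and> J2 \<in> {J \<in> S2. \<forall>J'\<in>S2. u J' \<le> u J}}"
proof (intro set_eqI iffI)
  fix J assume "J \<in> {J \<in> S. \<forall>J'\<in>S. s J' \<le> s J}"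
  then obtain J1 J2 where J: "J = J1 \<union> J2" "J1 \<in> S1" "J2 \<in> S2"
    and max: "\<And>J'. J' \<in> S \<Longrightarrow> s J' \<le> s (J1 \<union> J2)"
    using S by auto
  have "t K \<le> t J1" if "K \<in> S1" for K
  proof -
    have "K \<union> J2 \<in> S" using S that J(3) by blast
    then show ?thesis using max score[OF that J(3)] score[OF J(2,3)] by fastforce
  qed
  moreover have "u K \<le> u J2" if "K \<in> S2" for K
  proof -
    have "J1 \<union> K \<in> S" using S that J(2) by blast
    then show ?thesis using max score[OF J(2) that] score[OF J(2,3)] by fastforce
  qed
  ultimately show "J \<in> {J1 \<union> J2 | J1 J2. J1 \<in> {J \<in> S1. \<forall>J'\<in>S1. t J' \<le> t J}
                    \<and> J2 \<in> {J \<in> S2. \<forall>J'\<in>S2. u J' \<le> u J}}"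
    using J by blast
next
  fix J assume "J \<in> {J1 \<union> J2 | J1 J2. J1 \<in> {J \<in> S1. \<forall>J'\<in>S1. t J' \<le> t J}
                    \<and> J2 \<in> {J \<in> S2. \<forall>J'\<in>S2. u J' \<le> u J}}"
  then obtain J1 J2 where J: "J = J1 \<union> J2" "J1 \<in> S1" "J2 \<in> S2"
    and max1: "\<And>K. K \<in> S1 \<Longrightarrow> t K \<le> t J1" and max2: "\<And>K. K \<in> S2 \<Longrightarrow> u K \<le> u J2"
    by blast
  have "s K \<le> s J" if "K \<in> S" for K
  proof -
    obtain K1 K2 where "K = K1 \<union> K2" "K1 \<in> S1" "K2 \<in> S2" using \<open>K \<in> S\<close> S by blast
    then show ?thesis
      using score[of K1 K2] score[OF J(2,3)] max1[of K1] max2[of K2] J(1) by simp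
  qed
  then show "J \<in> {J \<in> S. \<forall>J'\<in>S. s J' \<le> s J}" using S J by blast
qed

lemma issue_not_subset_satisfiable:
  assumes "issue I" and "satisfiable (insert Gam X)"
  shows "\<not> I \<subseteq> X"
proof
  assume "I \<subseteq> X"
  obtain f where "I = {f, Neg f}" using assms(1) unfolding issue_def by blast
  moreover obtain v where "\<forall>g\<in>insert Gam X. eval v g" using assms(2) unfolding satisfiable_def by blast
  ultimately show False using \<open>I \<subseteq> X\<close> by (metis eval.simps(2) insert_subset subsetD subset_insertI)
qed

lemma agenda_subset: "agenda A \<Longrightarrow> B \<subseteq> A \<Longrightarrow> agenda B"
  unfolding agenda_def by (auto intro: finite_subset)

lemma finite_Union_agenda: "agenda A \<Longrightarrow> finite (\<Union>A)"
  unfolding agenda_def issue_def by auto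

lemma JS_subset_Union: "J \<in> JS Gam A \<Longrightarrow> J \<subseteq> \<Union>A"
  unfolding JS_def by simp

lemma finite_JS: "agenda A \<Longrightarrow> finite (JS Gam A)"
  by (rule finite_subset[of _ "Pow (\<Union>A)"]) (auto dest: JS_subset_Union finite_Union_agenda)

lemma finite_JS_member: "agenda A \<Longrightarrow> J \<in> JS Gam A \<Longrightarrow> finite J"
  by (meson JS_subset_Union finite_Union_agenda finite_subset)

lemma JS_restrict:
  assumes "J \<in> JS Gam A" and "B \<subseteq> A"
  shows "J \<inter> \<Union>B \<in> JS Gam B"
  using assms unfolding JS_def satisfiable_def by blast

lemma s_rev_unrejected:
  "(\<And>K. K \<in> JS Gam A \<Longrightarrow> f \<in> K) \<Longrightarrow> s_rev Gam A J f = 0"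
  unfolding s_rev_def by auto

lemma s_rev_eqI:
  assumes "agenda A" and "K \<in> JS Gam A" and "f \<notin> K"
    and min: "\<And>K'. K' \<in> JS Gam A \<Longrightarrow> f \<notin> K' \<Longrightarrow> dH J K \<le> dH J K'"
  shows "s_rev Gam A J f = dH J K"
proof -
  let ?D = "{dH J K' | K'. K' \<in> JS Gam A \<and> f \<notin> K'}"
  have "finite ?D" using finite_JS[OF assms(1)] by simp
  moreover have "dH J K \<in> ?D" using assms(2,3) by blast
  ultimately have "Min ?D = dH J K" using min by (intro Min_eqI) auto
  then show ?thesis using \<open>dH J K \<in> ?D\<close> unfolding s_rev_def Let_def by auto
qed

lemma support_restrict: "f \<in> \<Union>B \<Longrightarrow> support (restrict P B) f = support P f"
  unfolding support_def restrict_def by (auto intro!: arg_cong[where f = card])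

lemma Rrev_eq_argmax_sum:
  "Rrev Gam A P = argmax_JS Gam A (\<lambda>J. \<Sum>f\<in>J. \<Sum>i<length P. s_rev Gam A (P ! i) f)"
  unfolding Rrev_def by (subst sum.swap) (rule refl)

locale independent_agenda_partition =
  fixes Gam :: "'v form" and A A1 A2 :: "'v form set set"
  assumes agenda: "agenda A" and partition: "independent_partition Gam A A1 A2"
begin

lemma agenda_eq: "A = A1 \<union> A2"
  and consistent_union: "J1 \<in> JS Gam A1 \<Longrightarrow> J2 \<in> JS Gam A2 \<Longrightarrow> satisfiable (insert Gam (J1 \<union> J2))"
  using partition unfolding independent_partition_def by auto

lemma agenda1: "agenda A1" and agenda2: "agenda A2"
  using agenda agenda_subset agenda_eq by auto

lemma swap: "independent_agenda_partition Gam A A2 A1"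
  using agenda partition unfolding independent_agenda_partition_def independent_partition_def
  by (metis Un_commute inf_commute)

lemma overlap_forced:
  assumes J1: "J1 \<in> JS Gam A1" and J2: "J2 \<in> JS Gam A2"
  shows "J1 \<inter> \<Union>A2 \<subseteq> J2"
proof
  fix g assume g: "g \<in> J1 \<inter> \<Union>A2"
  then obtain I where I: "I \<in> A2" "g \<in> I" by blast
  then have "issue I" using agenda agenda_eq unfolding agenda_def by auto
  then obtain f where If: "I = {f, Neg f}" unfolding issue_def by blast
  obtain h where h: "h \<in> J2" "h \<in> I" using J2 I unfolding JS_def by blast
  show "g \<in> J2"
  proof (rule ccontr)
    assume "g \<notin> J2"
    then have "I \<subseteq> J1 \<union> J2" using g h I If by auto
    then show False
      using issue_not_subset_satisfiable[OF \<open>issue I\<close> consistent_union[OF J1 J2]] by blast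
  qed
qed

lemma overlap_forced':
  "J1 \<in> JS Gam A1 \<Longrightarrow> J2 \<in> JS Gam A2 \<Longrightarrow> J2 \<inter> \<Union>A1 \<subseteq> J1"
  using independent_agenda_partition.overlap_forced[OF swap] .

lemma Int_JS:
  assumes "J1 \<in> JS Gam A1" "J2 \<in> JS Gam A2"
  shows "J1 \<inter> J2 = J1 \<inter> \<Union>A2" "J1 \<inter> J2 = J2 \<inter> \<Union>A1"
  using overlap_forced[OF assms] overlap_forced'[OF assms] JS_subset_Union[OF assms(1)]
    JS_subset_Union[OF assms(2)] by blast+

lemma Int_JS_const:
  assumes "J1 \<in> JS Gam A1" "J2 \<in> JS Gam A2" "K1 \<in> JS Gam A1" "K2 \<in> JS Gam A2"
  shows "J1 \<inter> J2 = K1 \<inter> K2"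
  using Int_JS[OF assms(1,2)] Int_JS[OF assms(1,4)] Int_JS[OF assms(3,4)] by simp

lemma common_part:
  obtains C where "\<And>J1 J2. J1 \<in> JS Gam A1 \<Longrightarrow> J2 \<in> JS Gam A2 \<Longrightarrow> J1 \<inter> J2 = C"
proof (cases "\<exists>K1 K2. K1 \<in> JS Gam A1 \<and> K2 \<in> JS Gam A2")
  case True
  then obtain K1 K2 where K: "K1 \<in> JS Gam A1" "K2 \<in> JS Gam A2" by blast
  show thesis by (rule that) (rule Int_JS_const[OF _ _ K])
next
  case False
  show thesis by (rule that) (use False in blast)
qed

lemma JS_split:
  assumes "J \<in> JS Gam A"
  shows "J \<inter> \<Union>A1 \<in> JS Gam A1" "J \<inter> \<Union>A2 \<in> JS Gam A2" "J = J \<inter> \<Union>A1 \<union> J \<inter> \<Union>A2"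
proof -
  have "A1 \<subseteq> A" "A2 \<subseteq> A" using agenda_eq by auto
  then show "J \<inter> \<Union>A1 \<in> JS Gam A1" "J \<inter> \<Union>A2 \<in> JS Gam A2"
    using JS_restrict[OF assms] by blast+
  show "J = J \<inter> \<Union>A1 \<union> J \<inter> \<Union>A2" using JS_subset_Union[OF assms] agenda_eq by blast
qed

lemma Un_in_JS:
  assumes "J1 \<in> JS Gam A1" "J2 \<in> JS Gam A2"
  shows "J1 \<union> J2 \<in> JS Gam A"
proof -
  have "J1 \<subseteq> \<Union>A1" "\<forall>I\<in>A1. J1 \<inter> I \<noteq> {}" "J2 \<subseteq> \<Union>A2" "\<forall>I\<in>A2. J2 \<inter> I \<noteq> {}"
    using assms unfolding JS_def by auto
  then show ?thesis
    using consistent_union[OF assms] agenda_eq unfolding JS_def by auto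
qed

lemma JS_union_decomp: "JS Gam A = {J1 \<union> J2 | J1 J2. J1 \<in> JS Gam A1 \<and> J2 \<in> JS Gam A2}"
proof (intro set_eqI iffI)
  fix J assume "J \<in> JS Gam A"
  then show "J \<in> {J1 \<union> J2 | J1 J2. J1 \<in> JS Gam A1 \<and> J2 \<in> JS Gam A2}"
    using JS_split[of J] by blast
qed (auto intro: Un_in_JS)

lemma dH_Un_JS:
  assumes J: "J1 \<in> JS Gam A1" "J2 \<in> JS Gam A2" and K: "K1 \<in> JS Gam A1" "K2 \<in> JS Gam A2"
  shows "dH (J1 \<union> J2) (K1 \<union> K2) = dH J1 K1 + dH J2 K2"
proof -
  have "(J1 \<union> J2) - (K1 \<union> K2) = (J1 - K1) \<union> (J2 - K2)"
    using overlap_forced[OF K] overlap_forced'[OF K] JS_subset_Union[OF J(1)]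
      JS_subset_Union[OF J(2)] by blast
  moreover have "J1 \<inter> J2 = K1 \<inter> K2" using Int_JS_const J K .
  then have "(J1 - K1) \<inter> (J2 - K2) = {}" by blast
  ultimately show ?thesis
    unfolding dH_def using finite_JS_member[OF agenda1 J(1)] finite_JS_member[OF agenda2 J(2)]
    by (simp add: card_Un_disjoint)
qed

text \<open>A formula of \<open>A1\<close> shared with \<open>A2\<close> is accepted by everyone, so both costs are 0;
otherwise the cheapest rejection over \<open>A\<close> keeps the \<open>A2\<close>-part of \<open>J1 \<union> J2\<close>.\<close>
lemma s_rev_Un_JS:
  assumes f: "f \<in> K" "K \<in> JS Gam A1" and J: "J1 \<in> JS Gam A1" "J2 \<in> JS Gam A2"
  shows "s_rev Gam A (J1 \<union> J2) f = s_rev Gam A1 J1 f"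
proof (cases "f \<in> \<Union>A2")
  case True
  then have in2: "f \<in> L2" if "L2 \<in> JS Gam A2" for L2 using overlap_forced[OF f(2) that] f by blast
  have "f \<in> \<Union>A1" using f JS_subset_Union by blast
  then have "f \<in> L1" if "L1 \<in> JS Gam A1" for L1 using overlap_forced'[OF that J(2)] in2 J(2) by blast
  then have "s_rev Gam A1 J1 f = 0" by (rule s_rev_unrejected)
  moreover have "s_rev Gam A (J1 \<union> J2) f = 0"
    by (rule s_rev_unrejected) (use in2 JS_split(2) in blast)
  ultimately show ?thesis by simp
next
  case False
  show ?thesis
  proof (cases "\<exists>L1\<in>JS Gam A1. f \<notin> L1")
    case False
    then have "s_rev Gam A1 J1 f = 0" by (blast intro: s_rev_unrejected)
    moreover have "s_rev Gam A (J1 \<union> J2) f = 0"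
      by (rule s_rev_unrejected) (use False JS_split(1) in blast)
    ultimately show ?thesis by simp
  next
    case True
    then obtain K1 where K1: "K1 \<in> JS Gam A1" "f \<notin> K1"
      and min: "\<And>L1. L1 \<in> JS Gam A1 \<Longrightarrow> f \<notin> L1 \<Longrightarrow> dH J1 K1 \<le> dH J1 L1"
      using ex_has_least_nat[of "\<lambda>L1. L1 \<in> JS Gam A1 \<and> f \<notin> L1" _ "dH J1"] by blast
    have "s_rev Gam A1 J1 f = dH J1 K1" using s_rev_eqI[OF agenda1 K1 min] by blast
    moreover have cost: "dH (J1 \<union> J2) (K1 \<union> J2) = dH J1 K1"
      using dH_Un_JS[OF J K1(1) J(2)] by (simp add: dH_def)
    moreover have "s_rev Gam A (J1 \<union> J2) f = dH (J1 \<union> J2) (K1 \<union> J2)"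
    proof (rule s_rev_eqI[OF agenda Un_in_JS[OF K1(1) J(2)]])
      show "f \<notin> K1 \<union> J2" using K1 \<open>f \<notin> \<Union>A2\<close> JS_subset_Union[OF J(2)] by blast
      fix L assume L: "L \<in> JS Gam A" "f \<notin> L"
      have "dH (J1 \<union> J2) (K1 \<union> J2) = dH J1 K1" by (rule cost)
      also have "\<dots> \<le> dH J1 (L \<inter> \<Union>A1)" using min JS_split(1)[OF L(1)] L(2) by blast
      also have "\<dots> \<le> dH (J1 \<union> J2) L"
        using dH_Un_JS[OF J JS_split(1,2)[OF L(1)]] by (simp add: JS_split(3)[OF L(1), symmetric])
      finally show "dH (J1 \<union> J2) (K1 \<union> J2) \<le> dH (J1 \<union> J2) L" .
    qed
    ultimately show ?thesis by simp
  qed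
qed

lemma argmax_JS_sum_union:
  fixes w w1 w2 :: "'v form \<Rightarrow> nat"
  assumes w1: "\<And>J1 f. J1 \<in> JS Gam A1 \<Longrightarrow> f \<in> J1 \<Longrightarrow> w1 f = w f"
    and w2: "\<And>J2 f. J2 \<in> JS Gam A2 \<Longrightarrow> f \<in> J2 \<Longrightarrow> w2 f = w f"
  shows "argmax_JS Gam A (\<lambda>J. \<Sum>f\<in>J. w f) =
    {J1 \<union> J2 | J1 J2. J1 \<in> argmax_JS Gam A1 (\<lambda>J. \<Sum>f\<in>J. w1 f)
                    \<and> J2 \<in> argmax_JS Gam A2 (\<lambda>J. \<Sum>f\<in>J. w2 f)}"
proof -
  obtain C where C: "\<And>J1 J2. J1 \<in> JS Gam A1 \<Longrightarrow> J2 \<in> JS Gam A2 \<Longrightarrow> J1 \<inter> J2 = C"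
    using common_part by blast
  show ?thesis
    unfolding argmax_JS_def
  proof (rule argmax_union_decomp[OF JS_union_decomp, where c = "\<Sum>f\<in>C. w f"
        and s = "\<lambda>J. \<Sum>f\<in>J. w f" and t = "\<lambda>J. \<Sum>f\<in>J. w1 f" and u = "\<lambda>J. \<Sum>f\<in>J. w2 f"])
    fix J1 J2 assume J: "J1 \<in> JS Gam A1" "J2 \<in> JS Gam A2"
    have "(\<Sum>f\<in>J1 \<union> J2. w f) + (\<Sum>f\<in>J1 \<inter> J2. w f) = (\<Sum>f\<in>J1. w f) + (\<Sum>f\<in>J2. w f)"
      using finite_JS_member[OF agenda1 J(1)] finite_JS_member[OF agenda2 J(2)]
      by (rule sum.union_inter)
    then show "(\<Sum>f\<in>J1 \<union> J2. w f) + (\<Sum>f\<in>C. w f) = (\<Sum>f\<in>J1. w1 f) + (\<Sum>f\<in>J2. w2 f)"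
      using C[OF J] w1[OF J(1)] w2[OF J(2)] by simp
  qed
qed

lemma s_rev_restrict:
  assumes "f \<in> K" "K \<in> JS Gam A1" and J: "J \<in> JS Gam A"
  shows "s_rev Gam A J f = s_rev Gam A1 (J \<inter> \<Union>A1) f"
  using s_rev_Un_JS[OF assms(1,2) JS_split(1,2)[OF J]] by (simp add: JS_split(3)[OF J, symmetric])

lemma MED_union:
  "MED Gam A P = {J1 \<union> J2 | J1 J2. J1 \<in> MED Gam A1 (restrict P A1) \<and> J2 \<in> MED Gam A2 (restrict P A2)}"
  unfolding MED_def
proof (rule argmax_JS_sum_union)
  fix K f assume "K \<in> JS Gam A1" "f \<in> K"
  then have "f \<in> \<Union>A1" using JS_subset_Union by blast
  then show "support (restrict P A1) f = support P f" by (rule support_restrict)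
next
  fix K f assume "K \<in> JS Gam A2" "f \<in> K"
  then have "f \<in> \<Union>A2" using JS_subset_Union by blast
  then show "support (restrict P A2) f = support P f" by (rule support_restrict)
qed

lemma Rrev_union:
  assumes P: "\<And>J. J \<in> set P \<Longrightarrow> J \<in> JS Gam A"
  shows "Rrev Gam A P = {J1 \<union> J2 | J1 J2. J1 \<in> Rrev Gam A1 (restrict P A1) \<and> J2 \<in> Rrev Gam A2 (restrict P A2)}"
  unfolding Rrev_eq_argmax_sum
proof (rule argmax_JS_sum_union)
  fix K f assume "K \<in> JS Gam A1" "f \<in> K"
  then show "(\<Sum>i<length (restrict P A1). s_rev Gam A1 (restrict P A1 ! i) f)
      = (\<Sum>i<length P. s_rev Gam A (P ! i) f)"
    unfolding restrict_def length_map
    by (intro sum.cong) (simp_all add: s_rev_restrict[OF _ _ P])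
next
  interpret swapped: independent_agenda_partition Gam A A2 A1 by (rule swap)
  fix K f assume "K \<in> JS Gam A2" "f \<in> K"
  then show "(\<Sum>i<length (restrict P A2). s_rev Gam A2 (restrict P A2 ! i) f)
      = (\<Sum>i<length P. s_rev Gam A (P ! i) f)"
    unfolding restrict_def length_map
    by (intro sum.cong) (simp_all add: swapped.s_rev_restrict[OF _ _ P])
qed

end

theorem corollary1:
  fixes Gam :: "'v form" and n :: nat
    and A A1 A2 :: "'v form set set" and P :: "'v form set list"
  assumes "satisfiable {Gam}"
    and "n \<ge> 1"
    and "agenda A"
    and "independent_partition Gam A A1 A2"
    and "profile Gam n A P"
  shows "MED Gam A P =
           {J1 \<union> J2 | J1 J2. J1 \<in> MED Gam A1 (restrict P A1) \<and> J2 \<in> MED Gam A2 (restrict P A2)}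
       \<and> Rrev Gam A P =
           {J1 \<union> J2 | J1 J2. J1 \<in> Rrev Gam A1 (restrict P A1) \<and> J2 \<in> Rrev Gam A2 (restrict P A2)}"
proof -
  interpret independent_agenda_partition Gam A A1 A2
    using assms(3,4) by unfold_locales
  have "\<And>J. J \<in> set P \<Longrightarrow> J \<in> JS Gam A" using assms(5) unfolding profile_def by blast
  then show ?thesis using MED_union Rrev_union by simp
qed

end
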